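(* For every fixed positive integer $p$, $$\lim_{d\to\infty}\frac{1}{d}\cdot\frac{|B(d,p)\cap\mathbb{P}^d_\circ|}{\kappa(B(d,p)\cap\mathbb{P}^d_\circ)}=\frac{1}{p}.$$
   Context: A point of $\mathbb{Z}^d$ is primitive if its coordinates are relatively prime; $\mathbb{P}^d_\circ$ denotes the set of primitive points of $\mathbb{Z}^d$ whose first non-zero coordinate is positive. $B(d,p)=\{x\in\mathbb{R}^d:\|x\|_1\le p\}$. For a finite $\mathcal{X}\subset\mathbb{R}^d$, $\kappa(\mathcal{X})=\max_{1\le i\le d}\sum_{x\in\mathcal{X}}|x_i|$. *)

theory Defs
  imports Complex_Main
begin

text \<open>Points of Z^d are represented as integer lists of length d (coordinate i is x ! i).\<close>

definition primitive :: "int list \<Rightarrow> bool" where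
  "primitive x \<longleftrightarrow> Gcd (set x) = 1"

definition first_nonzero_pos :: "int list \<Rightarrow> bool" where
  "first_nonzero_pos x \<longleftrightarrow> (\<exists>i<length x. x ! i > 0 \<and> (\<forall>j<i. x ! j = 0))"

definition Pcirc :: "nat \<Rightarrow> int list set" where
  "Pcirc d = {x. length x = d \<and> primitive x \<and> first_nonzero_pos x}"

definition Bint :: "nat \<Rightarrow> nat \<Rightarrow> int list set" where
  "Bint d p = {x. length x = d \<and> (\<Sum>c\<leftarrow>x. \<bar>c\<bar>) \<le> int p}"

definition kappa :: "nat \<Rightarrow> int list set \<Rightarrow> int" where
  "kappa d X = Max ((\<lambda>i. \<Sum>x\<in>X. \<bar>x ! i\<bar>) ` {0..<d})"

end

theory Submission
  imports Defs "HOL-Library.Multiset"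
begin

(* Negating a vector or permuting its coordinates preserves the integer points of B(d,p) and
   primitivity, and negation exchanges the vectors whose first non-zero coordinate is positive
   with those where it is negative. Hence all coordinates have the same column sum of absolute
   values over X = B(d,p) \<inter> P(d), so d \<kappa>(X) is the total l1-norm of X and the quantity
   in the theorem is the inverse of the average l1-norm of X. That average tends to p: no point
   has norm above p, the points of smaller norm lie in B(d,p-1), which has at most
   (2d+1)^(p-1) integer points, while X contains the binomial(d,p) \<ge> (d/p)^p vectors with
   p entries 1 and all others 0. *)

abbreviation l1_norm :: "int list \<Rightarrow> int" where
  "l1_norm x \<equiv> \<Sum>c\<leftarrow>x. \<bar>c\<bar>"

lemma sum_list_list_update:
  fixes xs :: "'a::ab_group_add list"
  shows "k < length xs \<Longrightarrow> sum_list (xs[k := v]) = sum_list xs + v - xs ! k"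
proof (induction xs arbitrary: k)
  case (Cons a xs)
  then show ?case by (cases k) auto
qed simp

lemma l1_norm_list_update:
  "k < length x \<Longrightarrow> l1_norm (x[k := v]) = l1_norm x + \<bar>v\<bar> - \<bar>x ! k\<bar>"
  by (simp add: map_update sum_list_list_update)

lemma abs_le_l1_norm: "c \<in> set x \<Longrightarrow> \<bar>c\<bar> \<le> l1_norm x"
  by (rule member_le_sum_list) auto

lemma l1_norm_nonneg: "0 \<le> l1_norm x"
  by (induction x) auto

lemma l1_norm_eq_0_iff: "l1_norm x = 0 \<longleftrightarrow> set x \<subseteq> {0}"
  by (induction x) (auto simp: add_nonneg_eq_0_iff l1_norm_nonneg)

lemma l1_norm_mset_eq: "mset x = mset y \<Longrightarrow> l1_norm x = l1_norm y"
  by (metis mset_map sum_mset_sum_list)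

lemma finite_Bint: "finite (Bint d m)"
proof (rule finite_subset)
  show "Bint d m \<subseteq> {xs. set xs \<subseteq> {-int m..int m} \<and> length xs = d}"
    unfolding Bint_def using abs_le_l1_norm by (force simp: abs_le_iff)
  show "finite {xs. set xs \<subseteq> {-int m..int m} \<and> length xs = d}"
    by (rule finite_lists_length_eq) simp
qed

lemma Bint_0: "Bint d 0 = {replicate d 0}"
proof -
  have "l1_norm x \<le> 0 \<longleftrightarrow> set x \<subseteq> {0}" for x
    using l1_norm_nonneg[of x] l1_norm_eq_0_iff[of x] by linarith
  then show ?thesis
    by (auto simp: Bint_def replicate_length_same intro: replicate_eqI)
qed

lemma Bint_Suc_subset:
  "Bint d (Suc m) \<subseteq> Bint d m \<union> (\<lambda>(x, i, s). x[i := x ! i + s]) ` (Bint d m \<times> {0..<d} \<times> {-1, 1})"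
proof
  fix x assume x: "x \<in> Bint d (Suc m)"
  show "x \<in> Bint d m \<union> (\<lambda>(x, i, s). x[i := x ! i + s]) ` (Bint d m \<times> {0..<d} \<times> {-1, 1})"
  proof (cases "x \<in> Bint d m")
    case False
    with x have len: "length x = d" and norm: "l1_norm x = int m + 1"
      by (auto simp: Bint_def)
    then have "\<not> set x \<subseteq> {0}"
      using l1_norm_eq_0_iff[of x] by simp
    then obtain i where i: "i < d" "x ! i \<noteq> 0"
      using len by (fastforce simp: in_set_conv_nth)
    define s where "s = sgn (x ! i)"
    define y where "y = x[i := x ! i - s]"
    have s: "s \<in> {-1, 1}" and "\<bar>x ! i - s\<bar> = \<bar>x ! i\<bar> - 1"
      using i by (auto simp: s_def sgn_if)
    then have "y \<in> Bint d m"
      using l1_norm_list_update[of i x] i len norm by (simp add: y_def Bint_def)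
    moreover have "x = y[i := y ! i + s]"
      using i len by (simp add: y_def)
    ultimately show ?thesis
      using s i by force
  qed simp
qed

lemma card_Bint_le: "card (Bint d m) \<le> (2 * d + 1) ^ m"
proof (induction m)
  case 0
  then show ?case by (simp add: Bint_0)
next
  case (Suc m)
  let ?A = "Bint d m \<times> {0..<d} \<times> {-1, 1::int}"
  have "card (Bint d (Suc m)) \<le> card (Bint d m \<union> (\<lambda>(x, i, s). x[i := x ! i + s]) ` ?A)"
    by (rule card_mono[OF _ Bint_Suc_subset]) (simp add: finite_Bint)
  also have "\<dots> \<le> card (Bint d m) + card ?A"
    by (rule order_trans[OF card_Un_le add_left_mono[OF card_image_le]]) (simp add: finite_Bint)
  also have "\<dots> = card (Bint d m) * (2 * d + 1)"
    by (simp add: card_cartesian_product)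
  also have "\<dots> \<le> (2 * d + 1) ^ Suc m"
    using Suc by (metis mult_le_mono1 power_Suc2)
  finally show ?case .
qed

lemma sum_nth_eq_if_mset_closed:
  assumes closed: "\<And>x y. x \<in> Y \<Longrightarrow> mset y = mset x \<Longrightarrow> y \<in> Y"
    and len: "\<And>x. x \<in> Y \<Longrightarrow> length x = d"
    and "i < d" "j < d"
  shows "(\<Sum>x\<in>Y. f (x ! i)) = (\<Sum>x\<in>Y. f (x ! j))"
proof -
  define swap where "swap x = x[i := x ! j, j := x ! i]" for x :: "'a list"
  have swap_swap: "swap (swap x) = x" if "x \<in> Y" for x
    using len[OF that] \<open>i < d\<close> \<open>j < d\<close> by (intro nth_equalityI) (auto simp: swap_def nth_list_update)
  have swap_in: "swap x \<in> Y" if "x \<in> Y" for x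
    using closed[OF that] mset_swap[of j x i] len[OF that] \<open>i < d\<close> \<open>j < d\<close> by (simp add: swap_def)
  have swap_nth: "swap x ! j = x ! i" if "x \<in> Y" for x
    using len[OF that] \<open>i < d\<close> \<open>j < d\<close> by (simp add: swap_def nth_list_update)
  show ?thesis
    by (rule sum.reindex_bij_witness[where i=swap and j=swap]) (simp_all add: swap_swap swap_in swap_nth)
qed

lemma first_nonzero_pos_iff:
  assumes "i < length x" "x ! i \<noteq> 0" "\<forall>j<i. x ! j = 0"
  shows "first_nonzero_pos x \<longleftrightarrow> x ! i > 0"
  using assms unfolding first_nonzero_pos_def by (metis linorder_neqE_nat less_irrefl)

lemma first_nonzero_pos_uminus_iff:
  assumes "\<exists>i<length x. x ! i \<noteq> 0"
  shows "first_nonzero_pos (map uminus x) \<longleftrightarrow> \<not> first_nonzero_pos x"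
proof -
  obtain i where i: "i < length x" "x ! i \<noteq> 0" and before: "\<forall>j<i. x ! j = 0"
    using exists_least_iff[THEN iffD1, OF assms] by (metis order.strict_trans)
  show ?thesis
    using first_nonzero_pos_iff[OF i before] first_nonzero_pos_iff[of i "map uminus x"] i before
    by auto
qed

lemma sum_eq_twice_sum_first_nonzero_pos:
  fixes g :: "int list \<Rightarrow> 'a::comm_semiring_1"
  assumes "finite Y"
    and uminus_in: "\<And>x. x \<in> Y \<Longrightarrow> map uminus x \<in> Y"
    and nonzero: "\<And>x. x \<in> Y \<Longrightarrow> \<exists>i<length x. x ! i \<noteq> 0"
    and g_uminus: "\<And>x. x \<in> Y \<Longrightarrow> g (map uminus x) = g x"
  shows "(\<Sum>x\<in>Y. g x) = 2 * (\<Sum>x\<in>{x\<in>Y. first_nonzero_pos x}. g x)"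
proof -
  let ?P = "{x\<in>Y. first_nonzero_pos x}" and ?N = "{x\<in>Y. \<not> first_nonzero_pos x}"
  have N_eq_P: "(\<Sum>x\<in>?N. g x) = (\<Sum>x\<in>?P. g x)"
    by (rule sum.reindex_bij_witness[where i="map uminus" and j="map uminus"])
      (auto simp: uminus_in g_uminus first_nonzero_pos_uminus_iff nonzero)
  have "(\<Sum>x\<in>Y. g x) = (\<Sum>x\<in>?P \<union> ?N. g x)"
    by (intro sum.cong) auto
  also have "\<dots> = (\<Sum>x\<in>?P. g x) + (\<Sum>x\<in>?N. g x)"
    by (rule sum.union_disjoint) (use \<open>finite Y\<close> in auto)
  finally show ?thesis
    by (simp add: N_eq_P mult_2)
qed

lemma primitive_imp_nonzero: "primitive x \<Longrightarrow> \<exists>i<length x. x ! i \<noteq> 0"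
proof (rule ccontr)
  assume "primitive x" "\<not> (\<exists>i<length x. x ! i \<noteq> 0)"
  then have "set x \<subseteq> {0}"
    by (auto simp: in_set_conv_nth)
  with \<open>primitive x\<close> show False
    by (simp add: primitive_def Gcd_0_iff[symmetric])
qed

lemma sum_abs_nth_Bint_Pcirc_eq:
  assumes "i < d" "j < d"
  shows "(\<Sum>x\<in>Bint d p \<inter> Pcirc d. \<bar>x ! i\<bar>) = (\<Sum>x\<in>Bint d p \<inter> Pcirc d. \<bar>x ! j\<bar>)"
proof -
  define Y where "Y = Bint d p \<inter> {x. primitive x}"
  have X_eq: "Bint d p \<inter> Pcirc d = {x\<in>Y. first_nonzero_pos x}"
    by (auto simp: Y_def Pcirc_def Bint_def)
  have len: "length x = d" if "x \<in> Y" for x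
    using that by (simp add: Y_def Bint_def)
  have twice: "(\<Sum>x\<in>Y. \<bar>x ! k\<bar>) = 2 * (\<Sum>x\<in>Bint d p \<inter> Pcirc d. \<bar>x ! k\<bar>)" if "k < d" for k
    unfolding X_eq
  proof (rule sum_eq_twice_sum_first_nonzero_pos)
    show "finite Y"
      by (simp add: Y_def finite_Bint)
    fix x assume "x \<in> Y"
    then show "map uminus x \<in> Y"
      by (simp add: Y_def Bint_def primitive_def comp_def)
    show "\<exists>i<length x. x ! i \<noteq> 0"
      using \<open>x \<in> Y\<close> by (simp add: Y_def primitive_imp_nonzero)
    show "\<bar>map uminus x ! k\<bar> = \<bar>x ! k\<bar>"
      using \<open>x \<in> Y\<close> that len by simp
  qed
  have "(\<Sum>x\<in>Y. \<bar>x ! i\<bar>) = (\<Sum>x\<in>Y. \<bar>x ! j\<bar>)"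
  proof (rule sum_nth_eq_if_mset_closed[OF _ len assms])
    fix x y assume "x \<in> Y" and mset_eq: "mset y = mset x"
    have "length y = length x" "set y = set x" "l1_norm y = l1_norm x"
      using mset_eq_length[OF mset_eq] mset_eq_setD[OF mset_eq] l1_norm_mset_eq[OF mset_eq] .
    with \<open>x \<in> Y\<close> show "y \<in> Y"
      by (simp add: Y_def Bint_def primitive_def)
  qed
  then show ?thesis
    using twice assms by simp
qed

lemma kappa_eq_if_balanced:
  assumes "0 < d"
    and len: "\<And>x. x \<in> X \<Longrightarrow> length x = d"
    and balanced: "\<And>i. i < d \<Longrightarrow> (\<Sum>x\<in>X. \<bar>x ! i\<bar>) = (\<Sum>x\<in>X. \<bar>x ! 0\<bar>)"
  shows "int d * kappa d X = (\<Sum>x\<in>X. l1_norm x)"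
proof -
  have "(\<lambda>i. \<Sum>x\<in>X. \<bar>x ! i\<bar>) ` {0..<d} = (\<lambda>i. \<Sum>x\<in>X. \<bar>x ! 0\<bar>) ` {0..<d}"
    by (rule image_cong[OF refl balanced]) simp
  then have "kappa d X = (\<Sum>x\<in>X. \<bar>x ! 0\<bar>)"
    using \<open>0 < d\<close> by (simp add: kappa_def)
  then have "int d * kappa d X = (\<Sum>i<d. \<Sum>x\<in>X. \<bar>x ! 0\<bar>)"
    by simp
  also have "\<dots> = (\<Sum>i<d. \<Sum>x\<in>X. \<bar>x ! i\<bar>)"
    by (rule sum.cong[OF refl balanced[symmetric]]) simp
  also have "\<dots> = (\<Sum>x\<in>X. \<Sum>i<d. \<bar>x ! i\<bar>)"
    by (rule sum.swap)
  also have "\<dots> = (\<Sum>x\<in>X. l1_norm x)"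
    using len by (simp add: sum_list_sum_nth atLeast0LessThan)
  finally show ?thesis .
qed

lemma kappa_Bint_Pcirc:
  assumes "0 < d"
  shows "int d * kappa d (Bint d p \<inter> Pcirc d) = (\<Sum>x\<in>Bint d p \<inter> Pcirc d. l1_norm x)"
  using assms by (intro kappa_eq_if_balanced sum_abs_nth_Bint_Pcirc_eq) (auto simp: Bint_def)

lemma sum_l1_norm_le:
  assumes "X \<subseteq> Bint d p"
  shows "(\<Sum>x\<in>X. l1_norm x) \<le> int p * int (card X)"
proof -
  have "(\<Sum>x\<in>X. l1_norm x) \<le> of_nat (card X) * int p"
    by (rule sum_bounded_above) (use assms in \<open>auto simp: Bint_def\<close>)
  then show ?thesis
    by (simp add: mult.commute)
qed

lemma card_le_sum_l1_norm:
  assumes "finite X" "X \<subseteq> Bint d p"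
  shows "int p * int (card X) \<le> (\<Sum>x\<in>X. l1_norm x) + int p * int (card (Bint d (p - 1)))"
proof -
  have "int p * int (card X) = (\<Sum>x\<in>X. int p)"
    by simp
  also have "\<dots> \<le> (\<Sum>x\<in>X. l1_norm x + int p * of_bool (x \<in> Bint d (p - 1)))"
  proof (rule sum_mono)
    fix x assume "x \<in> X"
    then show "int p \<le> l1_norm x + int p * of_bool (x \<in> Bint d (p - 1))"
      using assms(2) l1_norm_nonneg[of x] by (auto simp: Bint_def)
  qed
  also have "\<dots> = (\<Sum>x\<in>X. l1_norm x) + int p * int (card (X \<inter> Bint d (p - 1)))"
    using \<open>finite X\<close> by (simp add: sum.distrib flip: sum_distrib_left)
  also have "\<dots> \<le> (\<Sum>x\<in>X. l1_norm x) + int p * int (card (Bint d (p - 1)))"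
    by (intro add_left_mono mult_left_mono) (auto intro: card_mono finite_Bint)
  finally show ?thesis .
qed

lemma indicator_list_in_Bint_Pcirc:
  assumes "S \<subseteq> {0..<d}" "card S = p" "0 < p"
  shows "map (\<lambda>i. of_bool (i \<in> S)) [0..<d] \<in> Bint d p \<inter> Pcirc d"
proof -
  let ?x = "map (\<lambda>i. of_bool (i \<in> S) :: int) [0..<d]"
  have "finite S" "S \<noteq> {}"
    using assms finite_subset by fastforce+
  have "l1_norm ?x = (\<Sum>i<d. of_bool (i \<in> S))"
    by (simp add: comp_def sum_list_sum_nth atLeast0LessThan)
  also have "\<dots> = int p"
    using assms by (simp add: Int_absorb1 atLeast0LessThan)
  finally have norm: "l1_norm ?x = int p" .
  define m where "m = Min S"
  have "m \<in> S"
    using \<open>finite S\<close> \<open>S \<noteq> {}\<close> by (simp add: m_def)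
  moreover have "m < d"
    using \<open>m \<in> S\<close> assms(1) by auto
  moreover have "j \<notin> S" if "j < m" for j
    using Min_le[OF \<open>finite S\<close>, of j] that by (auto simp: m_def)
  ultimately have "first_nonzero_pos ?x"
    unfolding first_nonzero_pos_def by (intro exI[of _ m]) auto
  moreover have "primitive ?x"
    using \<open>m \<in> S\<close> \<open>m < d\<close> by (auto simp: primitive_def intro!: Gcd_1 image_eqI[of _ _ m])
  ultimately show ?thesis
    using norm by (simp add: Bint_def Pcirc_def)
qed

lemma binomial_le_card_Bint_Pcirc:
  assumes "0 < p"
  shows "d choose p \<le> card (Bint d p \<inter> Pcirc d)"
proof -
  let ?F = "{S. S \<subseteq> {0..<d} \<and> card S = p}"
  let ?ind = "\<lambda>S. map (\<lambda>i. of_bool (i \<in> S) :: int) [0..<d]"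
  have "inj_on ?ind ?F"
  proof (rule inj_onI)
    fix S T assume "S \<in> ?F" "T \<in> ?F" "?ind S = ?ind T"
    then show "S = T"
      by (auto simp: list_eq_iff_nth_eq subset_iff)
  qed
  moreover have "?ind ` ?F \<subseteq> Bint d p \<inter> Pcirc d"
    using indicator_list_in_Bint_Pcirc assms by blast
  ultimately have "card ?F \<le> card (Bint d p \<inter> Pcirc d)"
    by (intro card_inj_on_le) (auto simp: finite_Bint)
  then show ?thesis
    by (simp add: n_subsets)
qed

lemma card_Bint_pred_over_card_Bint_Pcirc_le:
  assumes "0 < p" "p \<le> d"
  shows "real (card (Bint d (p - 1))) / real (card (Bint d p \<inter> Pcirc d)) \<le> 3 ^ (p - 1) * real p ^ p / real d"
proof -
  obtain q where p: "p = Suc q"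
    using assms gr0_implies_Suc by blast
  have "0 < real d"
    using assms by simp
  have "real (card (Bint d q)) \<le> real ((2 * d + 1) ^ q)"
    by (rule of_nat_mono[OF card_Bint_le])
  also have "\<dots> = (2 * real d + 1) ^ q"
    by (simp add: add.commute)
  also have "\<dots> \<le> (3 * real d) ^ q"
    using \<open>0 < real d\<close> assms by (intro power_mono) auto
  finally have num: "real (card (Bint d (p - 1))) \<le> (3 * real d) ^ q"
    by (simp add: p)
  have "real (d choose p) \<le> real (card (Bint d p \<inter> Pcirc d))"
    by (rule of_nat_mono[OF binomial_le_card_Bint_Pcirc[OF assms(1)]])
  then have den: "(real d / real p) ^ p \<le> real (card (Bint d p \<inter> Pcirc d))"
    using binomial_ge_n_over_k_pow_k[OF assms(2), where 'a=real] by linarith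
  have "real (card (Bint d (p - 1))) / real (card (Bint d p \<inter> Pcirc d)) \<le> (3 * real d) ^ q / (real d / real p) ^ p"
    using num den \<open>0 < real d\<close> assms by (intro frac_le) auto
  also have "\<dots> = 3 ^ q * real p ^ p / real d"
    using \<open>0 < real d\<close> assms by (simp add: p field_simps)
  finally show ?thesis
    by (simp add: p)
qed

lemma card_Bint_pred_over_card_Bint_Pcirc_tendsto_0:
  assumes "0 < p"
  shows "(\<lambda>d. real (card (Bint d (p - 1))) / real (card (Bint d p \<inter> Pcirc d))) \<longlonglongrightarrow> 0"
proof (rule tendsto_sandwich[of "\<lambda>_. 0" _ _ "\<lambda>d. 3 ^ (p - 1) * real p ^ p / real d"])
  show "\<forall>\<^sub>F d in sequentially.
      real (card (Bint d (p - 1))) / real (card (Bint d p \<inter> Pcirc d)) \<le> 3 ^ (p - 1) * real p ^ p / real d"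
    using eventually_ge_at_top[of p] by eventually_elim (rule card_Bint_pred_over_card_Bint_Pcirc_le[OF assms])
  show "(\<lambda>d. 3 ^ (p - 1) * real p ^ p / real d) \<longlonglongrightarrow> 0"
    by (rule lim_const_over_n)
qed simp_all

lemma mean_l1_norm_Bint_Pcirc_tendsto:
  assumes "0 < p"
  shows "(\<lambda>d. real_of_int (\<Sum>x\<in>Bint d p \<inter> Pcirc d. l1_norm x) / real (card (Bint d p \<inter> Pcirc d)))
    \<longlonglongrightarrow> real p"
proof -
  define c where "c d = real (card (Bint d p \<inter> Pcirc d))" for d
  define S where "S d = real_of_int (\<Sum>x\<in>Bint d p \<inter> Pcirc d. l1_norm x)" for d
  define B where "B d = real (card (Bint d (p - 1)))" for d
  have upper: "S d \<le> real p * c d" for d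
  proof -
    have "(\<Sum>x\<in>Bint d p \<inter> Pcirc d. l1_norm x) \<le> int p * int (card (Bint d p \<inter> Pcirc d))"
      by (rule sum_l1_norm_le) blast
    then have "S d \<le> real_of_int (int p * int (card (Bint d p \<inter> Pcirc d)))"
      unfolding S_def by (simp only: of_int_le_iff)
    then show ?thesis
      by (simp add: c_def)
  qed
  have lower: "real p * c d \<le> S d + real p * B d" for d
  proof -
    have "int p * int (card (Bint d p \<inter> Pcirc d))
        \<le> (\<Sum>x\<in>Bint d p \<inter> Pcirc d. l1_norm x) + int p * int (card (Bint d (p - 1)))"
      by (rule card_le_sum_l1_norm) (auto simp: finite_Bint)
    then have "real_of_int (int p * int (card (Bint d p \<inter> Pcirc d)))
        \<le> S d + real_of_int (int p * int (card (Bint d (p - 1))))"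
      unfolding S_def by (simp only: of_int_le_iff of_int_add[symmetric])
    then show ?thesis
      by (simp add: c_def B_def)
  qed
  have c_pos: "\<forall>\<^sub>F d in sequentially. 0 < c d"
    using eventually_ge_at_top[of p]
  proof eventually_elim
    case (elim d)
    then show ?case
      using order.strict_trans2[OF zero_less_binomial[OF elim] binomial_le_card_Bint_Pcirc[OF assms]]
      by (simp add: c_def)
  qed
  have "(\<lambda>d. S d / c d) \<longlonglongrightarrow> real p"
  proof (rule tendsto_sandwich[of "\<lambda>d. real p - real p * (B d / c d)" _ _ "\<lambda>_. real p"])
    show "\<forall>\<^sub>F d in sequentially. real p - real p * (B d / c d) \<le> S d / c d"
      using c_pos
    proof eventually_elim
      case (elim d)
      have "real p - real p * (B d / c d) = (real p * c d - real p * B d) / c d"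
        using elim by (simp add: field_simps)
      also have "\<dots> \<le> S d / c d"
        using lower[of d] elim by (intro divide_right_mono) auto
      finally show ?case .
    qed
    show "\<forall>\<^sub>F d in sequentially. S d / c d \<le> real p"
      using c_pos by eventually_elim (use upper in \<open>simp add: divide_le_eq\<close>)
    have "(\<lambda>d. real p - real p * (B d / c d)) \<longlonglongrightarrow> real p - real p * 0"
      unfolding B_def c_def by (intro tendsto_intros card_Bint_pred_over_card_Bint_Pcirc_tendsto_0 assms)
    then show "(\<lambda>d. real p - real p * (B d / c d)) \<longlonglongrightarrow> real p"
      by simp
  qed simp
  then show ?thesis
    by (simp add: S_def c_def)
qed

theorem theorem7p4:
  fixes p :: nat
  assumes "p > 0"
  shows "(\<lambda>d. (1 / real d) * (real (card (Bint d p \<inter> Pcirc d))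
            / real_of_int (kappa d (Bint d p \<inter> Pcirc d)))) \<longlonglongrightarrow> 1 / real p"
proof -
  let ?X = "\<lambda>d. Bint d p \<inter> Pcirc d"
  have "(\<lambda>d. inverse (real_of_int (\<Sum>x\<in>?X d. l1_norm x) / real (card (?X d)))) \<longlonglongrightarrow> inverse (real p)"
    using assms by (intro tendsto_inverse mean_l1_norm_Bint_Pcirc_tendsto) auto
  then have "(\<lambda>d. real (card (?X d)) / real_of_int (\<Sum>x\<in>?X d. l1_norm x)) \<longlonglongrightarrow> 1 / real p"
    by (simp add: inverse_eq_divide)
  moreover have "\<forall>\<^sub>F d in sequentially. real (card (?X d)) / real_of_int (\<Sum>x\<in>?X d. l1_norm x)
      = (1 / real d) * (real (card (?X d)) / real_of_int (kappa d (?X d)))"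
    using eventually_gt_at_top[of 0]
  proof eventually_elim
    case (elim d)
    then have "real_of_int (\<Sum>x\<in>?X d. l1_norm x) = real d * real_of_int (kappa d (?X d))"
      using kappa_Bint_Pcirc[OF elim, of p] by (metis of_int_mult of_int_of_nat_eq)
    then show ?case
      by simp
  qed
  ultimately show ?thesis
    by (rule Lim_transform_eventually)
qed

end
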